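(* Let $p$ be a prime. If $I$ is a Hopf ideal of $\mathcal A_{p*}$ contained in $I_p^{\langle0\rangle}$ such that $\mathcal A_{p*}/I$ is a cocommutative Hopf algebra, then $I=I_p^{\langle0\rangle}$. Similarly, for $k\ge1$, if $I$ is a Hopf ideal of $\mathcal A_p\langle k\rangle_*$ contained in $I_p^{\langle k\rangle}$ such that $\mathcal A_p\langle k\rangle_*/I$ is cocommutative, then $I=I_p^{\langle k\rangle}$.
   Context: Dual Steenrod algebra: $\mathcal A_{2*}=\mathbb F_2[\zeta_1,\zeta_2,\dots]$ ($\deg\zeta_i=2^i-1$); for odd $p$, $\mathcal A_{p*}=E(\tau_0,\tau_1,\dots)\otimes\mathbb F_p[\xi_1,\xi_2,\dots]$ ($\deg\tau_i=2p^i-1$, $\deg\xi_i=2(p^i-1)$), a graded commutative Hopf algebra with coproduct (with $\zeta_0=\xi_0=1$) $\mu(\zeta_n)=\sum_{k=0}^n\zeta_{n-k}^{2^k}\otimes\zeta_k$, $\mu(\xi_n)=\sum_{k=0}^n\xi_{n-k}^{p^k}\otimes\xi_k$, $\mu(\tau_n)=\sum_{k=0}^n\xi_{n-k}^{p^k}\otimes\tau_k+\tau_n\otimes1$. Cocommutativity is with respect to the graded switching map $x\otimes y\mapsto(-1)^{\deg x\deg y}y\otimes x$. For $k\ge1$, $\mathcal A_p\langle k\rangle_*$ is the Hopf subalgebra $\mathbb F_2[\zeta_i^{2^k}:i\ge1]$ ($p=2$), $E(\tau_0)\otimes\mathbb F_p[\xi_i^p:i\ge1]$ ($p$ odd, $k=1$),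 $\mathbb F_p[\xi_i^{p^k}:i\ge1]$ ($p$ odd, $k\ge2$); $\mathcal A_p\langle0\rangle_*=\mathcal A_{p*}$. $I_p^{\langle k\rangle}\subset\mathcal A_p\langle k\rangle_*$ is the ideal generated by all $\zeta_n^{2^{k+1}}$, $n\ge1$ ($p=2$); by $\tau_0$ and all $\xi_n^p$ ($p$ odd, $k=0$); by all $\xi_n^{p^{k+1}}$ ($p$ odd, $k\ge1$). *)

theory Defs
  imports Main "HOL-Computational_Algebra.Primes"
begin

text \<open>A monomial is a pair (E, R): E is the finite set of indices i of the exterior
generators tau_i occurring (always empty for p = 2), R i is the exponent of the
polynomial generator with index i >= 1 (zeta_i for p = 2, xi_i for p odd); R 0 = 0.
The monomial (E,R) stands for tau_{e_1} ... tau_{e_r} * prod_i x_i^{R i} with e_1 < ... < e_r.\<close>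

type_synonym mono = "nat set \<times> (nat \<Rightarrow> nat)"

text \<open>Elements are finitely supported coefficient functions (F_p-linear combinations of monomials);
tensors in A (x) A are finitely supported coefficient functions on pairs of monomials.\<close>
type_synonym 'k elt = "mono \<Rightarrow> 'k"
type_synonym 'k tens = "mono \<times> mono \<Rightarrow> 'k"

definition valid_mono :: "nat \<Rightarrow> mono \<Rightarrow> bool" where
  "valid_mono p m \<longleftrightarrow> finite (fst m) \<and> finite {i. snd m i \<noteq> 0} \<and> snd m 0 = 0
      \<and> (p = 2 \<longrightarrow> fst m = {})"

definition supp :: "('a \<Rightarrow> 'k::zero) \<Rightarrow> 'a set" where
  "supp f = {x. f x \<noteq> 0}"

definition valid_elt :: "nat \<Rightarrow> 'k::zero elt \<Rightarrow> bool" where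
  "valid_elt p f \<longleftrightarrow> finite (supp f) \<and> (\<forall>m. f m \<noteq> 0 \<longrightarrow> valid_mono p m)"

definition gdeg :: "nat \<Rightarrow> nat \<Rightarrow> nat" where
  "gdeg p i = (if p = 2 then 2 ^ i - 1 else 2 * (p ^ i - 1))"

definition mdeg :: "nat \<Rightarrow> mono \<Rightarrow> nat" where
  "mdeg p m = (\<Sum>e\<in>fst m. 2 * p ^ e - 1) + (\<Sum>i\<in>{i. snd m i \<noteq> 0}. snd m i * gdeg p i)"

definition unitmono :: mono where "unitmono = ({}, \<lambda>_. 0)"

text \<open>x_n^e (with x_0 = 1) and tau_n.\<close>
definition polymono :: "nat \<Rightarrow> nat \<Rightarrow> mono" where
  "polymono n e = ({}, \<lambda>j. if j = n \<and> n \<noteq> 0 then e else 0)"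

definition taumono :: "nat \<Rightarrow> mono" where
  "taumono n = ({n}, \<lambda>_. 0)"

definition bvec :: "mono \<Rightarrow> 'k::{zero,one} elt" where
  "bvec m = (\<lambda>x. if x = m then 1 else 0)"

definition tvec :: "mono \<Rightarrow> mono \<Rightarrow> 'k::{zero,one} tens" where
  "tvec a b = (\<lambda>x. if x = (a, b) then 1 else 0)"

text \<open>Multiplication of monomials: sign (0 if some tau_i would be squared) and result.
The sign comes from reordering the exterior generators, tau's anticommute.\<close>
definition msign :: "mono \<Rightarrow> mono \<Rightarrow> 'k::comm_ring_1" where
  "msign a b = (if fst a \<inter> fst b = {} then
      (- 1) ^ card {(e, f). e \<in> fst a \<and> f \<in> fst b \<and> f < e} else 0)"

definition mres :: "mono \<Rightarrow> mono \<Rightarrow> mono" where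
  "mres a b = (fst a \<union> fst b, \<lambda>i. snd a i + snd b i)"

definition mul :: "'k::comm_ring_1 elt \<Rightarrow> 'k elt \<Rightarrow> 'k elt" where
  "mul f g = (\<lambda>c. \<Sum>(a, b)\<in>supp f \<times> supp g.
      if mres a b = c then msign a b * f a * g b else 0)"

text \<open>The product of the graded tensor product algebra A (x) A:
(a (x) b)(c (x) d) = (-1)^{|b||c|} ac (x) bd.\<close>
definition tmul :: "nat \<Rightarrow> 'k::comm_ring_1 tens \<Rightarrow> 'k tens \<Rightarrow> 'k tens" where
  "tmul p t u = (\<lambda>(c1, c2). \<Sum>((a1, a2), (b1, b2))\<in>supp t \<times> supp u.
      if mres a1 b1 = c1 \<and> mres a2 b2 = c2
      then (- 1) ^ (mdeg p a2 * mdeg p b1) * msign a1 b1 * msign a2 b2 * t (a1, a2) * u (b1, b2)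
      else 0)"

definition tone :: "'k::{zero,one} tens" where "tone = tvec unitmono unitmono"

definition tadd :: "'k::plus tens \<Rightarrow> 'k tens \<Rightarrow> 'k tens" where
  "tadd t u = (\<lambda>x. t x + u x)"

primrec tpow :: "nat \<Rightarrow> 'k::comm_ring_1 tens \<Rightarrow> nat \<Rightarrow> 'k tens" where
  "tpow p t 0 = tone"
| "tpow p t (Suc n) = tmul p t (tpow p t n)"

text \<open>Coproduct of the polynomial generators:
mu(x_n) = sum_{k=0}^n x_{n-k}^{p^k} (x) x_k, and of the exterior generators:
mu(tau_n) = sum_{k=0}^n xi_{n-k}^{p^k} (x) tau_k + tau_n (x) 1.\<close>
definition comul_gen :: "nat \<Rightarrow> nat \<Rightarrow> 'k::comm_ring_1 tens" where
  "comul_gen p n = (\<lambda>x. \<Sum>k\<in>{0..n}. tvec (polymono (n - k) (p ^ k)) (polymono k 1) x)"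

definition comul_tau :: "nat \<Rightarrow> nat \<Rightarrow> 'k::comm_ring_1 tens" where
  "comul_tau p n = (\<lambda>x. tvec (taumono n) unitmono x
      + (\<Sum>k\<in>{0..n}. tvec (polymono (n - k) (p ^ k)) (taumono k) x))"

definition comul_mono :: "nat \<Rightarrow> mono \<Rightarrow> 'k::comm_ring_1 tens" where
  "comul_mono p m = tmul p
      (foldr (tmul p) (map (comul_tau p) (sorted_list_of_set (fst m))) tone)
      (foldr (tmul p) (map (\<lambda>i. tpow p (comul_gen p i) (snd m i))
           (sorted_list_of_set {i. snd m i \<noteq> 0})) tone)"

definition comul :: "nat \<Rightarrow> 'k::comm_ring_1 elt \<Rightarrow> 'k tens" where
  "comul p f = (\<lambda>x. \<Sum>m\<in>supp f. f m * comul_mono p m x)"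

definition counit :: "'k::zero elt \<Rightarrow> 'k" where
  "counit f = f unitmono"

definition tswap :: "nat \<Rightarrow> 'k::comm_ring_1 tens \<Rightarrow> 'k tens" where
  "tswap p t = (\<lambda>(m1, m2). (- 1) ^ (mdeg p m1 * mdeg p m2) * t (m2, m1))"

text \<open>Antipode: the convolution inverse of the identity, m o (chi (x) id) o mu = eta o epsilon,
determined on monomials and extended linearly.\<close>
definition antipode_mono :: "nat \<Rightarrow> mono \<Rightarrow> 'k::comm_ring_1 elt" where
  "antipode_mono p = (THE chi.
     (\<forall>m. \<not> valid_mono p m \<longrightarrow> chi m = (\<lambda>_. 0)) \<and>
     (\<forall>m. valid_mono p m \<longrightarrow> valid_elt p (chi m) \<and>
        (\<lambda>x. \<Sum>(a, b)\<in>supp (comul_mono p m :: 'k tens). comul_mono p m (a, b) * mul (chi a) (bvec b) x)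
        = (if m = unitmono then bvec unitmono else (\<lambda>_. 0))))"

definition antipode :: "nat \<Rightarrow> 'k::comm_ring_1 elt \<Rightarrow> 'k elt" where
  "antipode p f = (\<lambda>x. \<Sum>m\<in>supp f. f m * antipode_mono p m x)"

definition inAk_mono :: "nat \<Rightarrow> nat \<Rightarrow> mono \<Rightarrow> bool" where
  "inAk_mono p k m =
    (if k = 0 then True
     else if p = 2 then fst m = {} \<and> (\<forall>i. 2 ^ k dvd snd m i)
     else if k = 1 then fst m \<subseteq> {0} \<and> (\<forall>i. p dvd snd m i)
     else fst m = {} \<and> (\<forall>i. p ^ k dvd snd m i))"

definition Ak :: "nat \<Rightarrow> nat \<Rightarrow> 'k::zero elt set" where
  "Ak p k = {f. valid_elt p f \<and> (\<forall>m. f m \<noteq> 0 \<longrightarrow> inAk_mono p k m)}"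

definition sub_ideal :: "'k::comm_ring_1 elt set \<Rightarrow> 'k elt set \<Rightarrow> bool" where
  "sub_ideal B I \<longleftrightarrow> I \<subseteq> B \<and> (\<lambda>_. 0) \<in> I
     \<and> (\<forall>x\<in>I. \<forall>y\<in>I. (\<lambda>m. x m + y m) \<in> I)
     \<and> (\<forall>c x. x \<in> I \<longrightarrow> (\<lambda>m. c * x m) \<in> I)
     \<and> (\<forall>b\<in>B. \<forall>x\<in>I. mul b x \<in> I)"

definition homogeneous :: "nat \<Rightarrow> 'k::zero elt set \<Rightarrow> bool" where
  "homogeneous p I \<longleftrightarrow> (\<forall>x\<in>I. \<forall>n. (\<lambda>m. if mdeg p m = n then x m else 0) \<in> I)"

definition tensor :: "'k::times elt \<Rightarrow> 'k elt \<Rightarrow> 'k tens" where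
  "tensor a b = (\<lambda>(m1, m2). a m1 * b m2)"

text \<open>The subspace I (x) B + B (x) I of B (x) B (the kernel of B (x) B -> B/I (x) B/I).\<close>
definition tens_ideal :: "'k::comm_ring_1 elt set \<Rightarrow> 'k elt set \<Rightarrow> 'k tens set" where
  "tens_ideal B I = {t. \<exists>xs. set xs \<subseteq> (I \<times> B) \<union> (B \<times> I) \<and>
      t = (\<lambda>x. \<Sum>(a, b)\<leftarrow>xs. tensor a b x)}"

definition hopf_ideal :: "nat \<Rightarrow> 'k::comm_ring_1 elt set \<Rightarrow> 'k elt set \<Rightarrow> bool" where
  "hopf_ideal p B I \<longleftrightarrow> sub_ideal B I \<and> homogeneous p I
     \<and> (\<forall>x\<in>I. counit x = 0)
     \<and> (\<forall>x\<in>I. comul p x \<in> tens_ideal B I)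
     \<and> (\<forall>x\<in>I. antipode p x \<in> I)"

text \<open>B/I is cocommutative: (pi (x) pi)(T o mu - mu) = 0, i.e. T mu(x) - mu(x) lies in
ker(pi (x) pi) = I (x) B + B (x) I for all x in B.\<close>
definition quot_cocomm :: "nat \<Rightarrow> 'k::comm_ring_1 elt set \<Rightarrow> 'k elt set \<Rightarrow> bool" where
  "quot_cocomm p B I \<longleftrightarrow>
     (\<forall>x\<in>B. (\<lambda>y. tswap p (comul p x) y - comul p x y) \<in> tens_ideal B I)"

definition Igens :: "nat \<Rightarrow> nat \<Rightarrow> 'k::{zero,one} elt set" where
  "Igens p k =
    (if p = 2 then {bvec (polymono n (2 ^ (k + 1))) | n. n \<ge> 1}
     else if k = 0 then insert (bvec (taumono 0)) {bvec (polymono n p) | n. n \<ge> 1}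
     else {bvec (polymono n (p ^ (k + 1))) | n. n \<ge> 1})"

definition Ipk :: "nat \<Rightarrow> nat \<Rightarrow> 'k::comm_ring_1 elt set" where
  "Ipk p k = \<Inter> {J. sub_ideal (Ak p k) J \<and> Igens p k \<subseteq> J}"

end

theory Submission
  imports Defs "HOL-Number_Theory.Residues" "HOL-Library.Poly_Mapping"
    "HOL-Library.Function_Algebras" "HOL-Library.Product_Plus"
begin

text \<open>Let B = A_p<k>_*, write x_i for zeta_i resp. xi_i, and put a = x_1^{p^k}.
No generator of I_p^<k> divides the monomial a, so no monomial of an element of I_p^<k>
divides a; in particular every element of I has vanishing a-coefficient. Consequently,
taking the coefficient of a (x) - maps I (x) B + B (x) I into I, and by cocommutativity of B/I
it maps T mu(y) - mu(y) into I for every y in B.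
For y = x_{n+1}^{p^k}, Frobenius gives mu(y) = sum_j x_{n+1-j}^{p^{k+j}} (x) x_j^{p^k}, and the
coefficient of a (x) - in T mu(y) - mu(y) is x_n^{p^{k+1}}. For p odd, k = 0 and y = tau_1 it is
-tau_0. Hence I contains all generators of I_p^<k>.\<close>

lemma CHAR_eq_prime_card:
  assumes "prime p" and "card (UNIV :: 'a::{idom,finite} set) = p"
  shows "CHAR('a) = p"
proof -
  have "CHAR('a) dvd p" using CHAR_dvd_CARD[where 'a='a] assms(2) by simp
  moreover have "prime CHAR('a)"
    by (rule prime_CHAR_semidom, rule finite_imp_CHAR_pos) simp
  ultimately show ?thesis using assms(1) by (simp add: primes_dvd_imp_eq)
qed

lemma CHAR_poly_mapping: "CHAR('a::comm_monoid_add \<Rightarrow>\<^sub>0 'k::comm_semiring_1) = CHAR('k)"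
proof (rule CHAR_eqI)
  show "of_nat CHAR('k) = (0::'a \<Rightarrow>\<^sub>0 'k)"
    by (metis single_of_nat of_nat_CHAR single_zero)
  fix n assume "of_nat n = (0::'a \<Rightarrow>\<^sub>0 'k)"
  hence "Poly_Mapping.lookup (of_nat n :: 'a \<Rightarrow>\<^sub>0 'k) 0 = 0" by simp
  hence "(of_nat n :: 'k) = 0" by (simp add: lookup_of_nat)
  thus "CHAR('k) dvd n" by (simp add: of_nat_eq_0_iff_char_dvd)
qed

lemma lookup_times_keys:
  fixes f g :: "'a::monoid_add \<Rightarrow>\<^sub>0 'b::semiring_0"
  shows "Poly_Mapping.lookup (f * g) c =
           (\<Sum>(a, b)\<in>Poly_Mapping.keys f \<times> Poly_Mapping.keys g.
              if c = a + b then Poly_Mapping.lookup f a * Poly_Mapping.lookup g b else 0)"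
proof -
  have "Poly_Mapping.lookup (f * g) c =
      (\<Sum>(a, b). Poly_Mapping.lookup f a * Poly_Mapping.lookup g b when c = a + b)"
    unfolding times_poly_mapping.rep_eq by (rule prod_fun_unfold_prod) auto
  also have "\<dots> = (\<Sum>(a, b)\<in>Poly_Mapping.keys f \<times> Poly_Mapping.keys g.
      Poly_Mapping.lookup f a * Poly_Mapping.lookup g b when c = a + b)"
    by (rule Sum_any.expand_superset) (auto simp: in_keys_iff)
  finally show ?thesis by (simp add: when_def)
qed

section \<open>The tau-free part of A (x) A\<close>

text \<open>Between tau-free monomials the Koszul sign of the tensor product is trivial in
characteristic p (their degrees are even for odd p, and -1 = 1 for p = 2), so the tau-free
part of A (x) A is the commutative polynomial ring in two copies of the x_i, where Frobenius
is available. A pair (r, s) of exponent functions stands for x^r (x) x^s.\<close>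

type_synonym 'k bipoly = "((nat \<Rightarrow> nat) \<times> (nat \<Rightarrow> nat)) \<Rightarrow>\<^sub>0 'k"

definition tens_of_bipoly :: "'k::comm_ring_1 bipoly \<Rightarrow> 'k tens" where
  "tens_of_bipoly f = (\<lambda>(m1, m2).
     if fst m1 = {} \<and> fst m2 = {} then Poly_Mapping.lookup f (snd m1, snd m2) else 0)"

lemma supp_tens_of_bipoly:
  "supp (tens_of_bipoly f) = (\<lambda>(r, s). (({}, r), ({}, s))) ` Poly_Mapping.keys f"
proof (rule Set.set_eqI, rule iffI)
  fix x assume "x \<in> supp (tens_of_bipoly f)"
  then obtain r s where "x = (({}, r), ({}, s))" "Poly_Mapping.lookup f (r, s) \<noteq> 0"
    by (cases x) (auto simp: supp_def tens_of_bipoly_def split: if_splits)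
  thus "x \<in> (\<lambda>(r, s). (({}, r), ({}, s))) ` Poly_Mapping.keys f"
    by (auto simp: in_keys_iff intro!: image_eqI[where x="(r, s)"])
qed (auto simp: supp_def tens_of_bipoly_def in_keys_iff)

lemma msign_tau_free: "msign ({}, r) ({}, s) = 1"
  by (simp add: msign_def)

lemma mres_tau_free: "mres ({}, r) ({}, s) = ({}, r + s)"
  by (simp add: mres_def plus_fun_def)

lemma koszul_sign_tau_free:
  assumes "of_nat p = (0::'k::comm_ring_1)" and "prime p"
  shows "(- 1 :: 'k) ^ (mdeg p ({}, r) * mdeg p ({}, s)) = 1"
proof (cases "p = 2")
  case True
  hence "(1::'k) + 1 = 0" using assms(1) by (metis one_add_one of_nat_1 of_nat_add)
  hence "(- 1::'k) = 1" by (metis add_eq_0_iff)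
  thus ?thesis by (metis power_one)
next
  case False
  hence "even (mdeg p ({}, r))" by (auto simp: mdeg_def gdeg_def intro!: dvd_sum)
  thus ?thesis by simp
qed

lemma tens_of_bipoly_mult:
  assumes "of_nat p = (0::'k::comm_ring_1)" and "prime p"
  shows "tens_of_bipoly (f * g :: 'k bipoly) = tmul p (tens_of_bipoly f) (tens_of_bipoly g)"
proof (rule ext, clarify)
  fix c1 c2 :: mono
  let ?h = "\<lambda>((r1, r2), (s1, s2)). ((({}, r1), ({}, r2)), (({}, s1), ({}, s2)))
              :: (mono \<times> mono) \<times> (mono \<times> mono)"
  have inj: "inj_on ?h (Poly_Mapping.keys f \<times> Poly_Mapping.keys g)" by (auto simp: inj_on_def)
  have supp: "supp (tens_of_bipoly f) \<times> supp (tens_of_bipoly g) =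
      ?h ` (Poly_Mapping.keys f \<times> Poly_Mapping.keys g)"
    by (auto simp: supp_tens_of_bipoly) force
  have "tmul p (tens_of_bipoly f) (tens_of_bipoly g) (c1, c2) =
      (\<Sum>x\<in>Poly_Mapping.keys f \<times> Poly_Mapping.keys g. (\<lambda>((a1, a2), (b1, b2)).
        if mres a1 b1 = c1 \<and> mres a2 b2 = c2
        then (- 1) ^ (mdeg p a2 * mdeg p b1) * msign a1 b1 * msign a2 b2
               * tens_of_bipoly f (a1, a2) * tens_of_bipoly g (b1, b2)
        else 0) (?h x))"
    unfolding tmul_def supp by (simp add: sum.reindex[OF inj] del: split_paired_all)
  also have "\<dots> = (\<Sum>x\<in>Poly_Mapping.keys f \<times> Poly_Mapping.keys g. (\<lambda>((r1, r2), (s1, s2)).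
      if ({}, r1 + s1) = c1 \<and> ({}, r2 + s2) = c2
      then Poly_Mapping.lookup f (r1, r2) * Poly_Mapping.lookup g (s1, s2) else 0) x)"
    by (rule sum.cong)
      (auto simp: msign_tau_free mres_tau_free koszul_sign_tau_free[OF assms] tens_of_bipoly_def)
  also have "\<dots> = tens_of_bipoly (f * g) (c1, c2)"
  proof (cases "fst c1 = {} \<and> fst c2 = {}")
    case True
    then obtain r s where "c1 = ({}, r)" "c2 = ({}, s)" by (cases c1, cases c2) auto
    thus ?thesis unfolding tens_of_bipoly_def lookup_times_keys by (auto intro!: sum.cong)
  next
    case False
    thus ?thesis by (auto simp: tens_of_bipoly_def intro!: sum.neutral)
  qed
  finally show "tens_of_bipoly (f * g) (c1, c2) =
      tmul p (tens_of_bipoly f) (tens_of_bipoly g) (c1, c2)" by simp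
qed

lemma tens_of_bipoly_one: "tens_of_bipoly 1 = tone"
  by (auto simp: tens_of_bipoly_def tone_def tvec_def unitmono_def lookup_one when_def
      zero_fun_def zero_prod_def fun_eq_iff)

lemma tens_of_bipoly_power:
  assumes "of_nat p = (0::'k::comm_ring_1)" and "prime p"
  shows "tpow p (tens_of_bipoly (f :: 'k bipoly)) n = tens_of_bipoly (f ^ n)"
  by (induction n) (simp_all add: tens_of_bipoly_one tens_of_bipoly_mult[OF assms])

lemma tswap_tens_of_bipoly:
  assumes "of_nat p = (0::'k::comm_ring_1)" and "prime p"
  shows "tswap p (tens_of_bipoly f :: 'k tens) (a, b) = tens_of_bipoly f (b, a)"
proof (cases "fst a = {} \<and> fst b = {}")
  case True
  hence "a = ({}, snd a)" "b = ({}, snd b)" by (metis prod.collapse)+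
  hence "(- 1 :: 'k) ^ (mdeg p a * mdeg p b) = 1" by (metis koszul_sign_tau_free[OF assms])
  thus ?thesis by (simp add: tswap_def)
qed (auto simp: tswap_def tens_of_bipoly_def)

lemma tens_of_bipoly_sum: "tens_of_bipoly (sum F A) = (\<lambda>x. \<Sum>a\<in>A. tens_of_bipoly (F a) x)"
proof (rule ext, clarify)
  fix a r b s
  show "tens_of_bipoly (sum F A) ((a, r), (b, s)) =
      (\<Sum>x\<in>A. tens_of_bipoly (F x) ((a, r), (b, s)))"
    by (cases "a = {}"; cases "b = {}") (simp_all add: tens_of_bipoly_def lookup_sum)
qed

lemma tens_of_bipoly_single:
  "tens_of_bipoly (Poly_Mapping.single (r, s) 1) = tvec ({}, r) ({}, s)"
  by (auto simp: tens_of_bipoly_def tvec_def lookup_single when_def)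

lemma polymono_eq_tau_free: "polymono n e = ({}, snd (polymono n e))"
  by (simp add: polymono_def)

text \<open>mu(x_n^q) = sum_j x_{n-j}^{q p^j} (x) x_j^q when q is a power of p; q = 1 gives comul_gen.\<close>

definition bipoly_comul_gen :: "nat \<Rightarrow> nat \<Rightarrow> nat \<Rightarrow> 'k::comm_ring_1 bipoly" where
  "bipoly_comul_gen p q n =
     (\<Sum>j\<in>{0..n}. Poly_Mapping.single (snd (polymono (n - j) (q * p ^ j)), snd (polymono j q)) 1)"

lemma comul_gen_eq_tens_of_bipoly: "comul_gen p n = tens_of_bipoly (bipoly_comul_gen p 1 n)"
  unfolding bipoly_comul_gen_def tens_of_bipoly_sum tens_of_bipoly_single comul_gen_def
  by (subst (1 2) polymono_eq_tau_free) simp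

lemma tens_of_bipoly_comul_gen_apply:
  "tens_of_bipoly (bipoly_comul_gen p q n) (m1, m2) =
     (\<Sum>j\<in>{0..n}. if m1 = polymono (n - j) (q * p ^ j) \<and> m2 = polymono j q then 1 else 0)"
  by (cases m1, cases m2)
    (auto simp: bipoly_comul_gen_def tens_of_bipoly_sum tens_of_bipoly_single tvec_def polymono_def)

lemma single_power:
  "Poly_Mapping.single (r, s) (1::'k::comm_semiring_1) ^ n =
     Poly_Mapping.single (\<lambda>i. n * r i, \<lambda>i. n * s i) 1"
proof (induction n)
  case 0 thus ?case by (simp add: zero_fun_def zero_prod_def flip: single_one)
next
  case (Suc n) thus ?case by (simp add: mult_single plus_fun_def algebra_simps)
qed

lemma bipoly_comul_gen_power:
  assumes "CHAR('k::comm_ring_1) = p" and "prime p"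
  shows "(bipoly_comul_gen p 1 n :: 'k bipoly) ^ (p ^ k) = bipoly_comul_gen p (p ^ k) n"
proof -
  have "CHAR('k bipoly) = p" using assms(1) by (simp add: CHAR_poly_mapping)
  moreover have "(\<lambda>i. q * snd (polymono m e) i) = snd (polymono m (q * e))" for q m e
    by (auto simp: polymono_def)
  ultimately show ?thesis
    unfolding bipoly_comul_gen_def
    by (subst freshmans_dream_sum'[where n = k]) (simp_all add: assms single_power)
qed

lemma supp_bvec: "supp (bvec m :: 'k::zero_neq_one elt) = {m}"
  by (auto simp: supp_def bvec_def)

lemma comul_bvec: "comul p (bvec m :: 'k::comm_ring_1 elt) = comul_mono p m"
  unfolding comul_def supp_bvec by (simp add: bvec_def)

lemma comul_polymono_prime_power:
  assumes "CHAR('k::comm_ring_1) = p" and "prime p"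
  shows "comul p (bvec (polymono (Suc n) (p ^ k)) :: 'k elt) =
           tens_of_bipoly (bipoly_comul_gen p (p ^ k) (Suc n))"
proof -
  have char0: "of_nat p = (0::'k)" using assms(1) by auto
  have "{i. snd (polymono (Suc n) (p ^ k)) i \<noteq> 0} = {Suc n}"
    using prime_gt_0_nat[OF assms(2)] by (auto simp: polymono_def)
  hence "comul_mono p (polymono (Suc n) (p ^ k)) =
      tmul p tone (tmul p (tpow p (comul_gen p (Suc n)) (p ^ k)) tone :: 'k tens)"
    by (simp add: comul_mono_def polymono_def)
  also have "\<dots> = tens_of_bipoly (1 * (bipoly_comul_gen p 1 (Suc n) ^ p ^ k * 1))"
    by (simp only: comul_gen_eq_tens_of_bipoly tens_of_bipoly_power[OF char0 assms(2)]
        tens_of_bipoly_one[symmetric] tens_of_bipoly_mult[OF char0 assms(2), symmetric])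
  also have "\<dots> = tens_of_bipoly (bipoly_comul_gen p (p ^ k) (Suc n))"
    by (simp only: mult_1_left mult_1_right bipoly_comul_gen_power[OF assms])
  finally show ?thesis by (simp only: comul_bvec)
qed

lemma supp_tone: "supp (tone :: 'k::zero_neq_one tens) = {(unitmono, unitmono)}"
  by (auto simp: supp_def tone_def tvec_def)

lemma tmul_tone_right:
  assumes "finite (supp t)"
  shows "tmul p (t :: 'k::comm_ring_1 tens) tone = t"
proof (rule ext, clarify)
  fix c1 c2 :: mono
  have inj: "inj_on (\<lambda>a. (a, (unitmono, unitmono))) (supp t)" by (auto simp: inj_on_def)
  have supp: "supp t \<times> supp (tone :: 'k tens) = (\<lambda>a. (a, (unitmono, unitmono))) ` supp t"
    by (auto simp: supp_tone)
  have unit: "mres a unitmono = a" "msign a unitmono = 1" "mdeg p unitmono = 0" for a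
    by (cases a) (simp_all add: mres_def msign_def mdeg_def unitmono_def)
  have "tmul p t tone (c1, c2) = (\<Sum>a\<in>supp t. if a = (c1, c2) then t a else 0)"
    unfolding tmul_def supp
    by (simp add: sum.reindex[OF inj] unit tone_def tvec_def split_def
        del: split_paired_all cong: if_cong) (auto intro!: sum.cong)
  also have "\<dots> = t (c1, c2)"
    using assms by (simp add: supp_def)
  finally show "tmul p t tone (c1, c2) = t (c1, c2)" .
qed

lemma finite_supp_comul_tau: "finite (supp (comul_tau p n :: 'k::comm_ring_1 tens))"
proof (rule finite_subset)
  show "supp (comul_tau p n :: 'k tens) \<subseteq>
      insert (taumono n, unitmono) ((\<lambda>k. (polymono (n - k) (p ^ k), taumono k)) ` {0..n})"
    by (auto simp: supp_def comul_tau_def tvec_def split: if_splits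
        elim!: sum.not_neutral_contains_not_neutral)
qed auto

lemma comul_taumono: "comul p (bvec (taumono n) :: 'k::comm_ring_1 elt) = comul_tau p n"
proof -
  have "comul_mono p (taumono n) = tmul p (tmul p (comul_tau p n) tone) (tone :: 'k tens)"
    by (simp add: comul_mono_def taumono_def)
  thus ?thesis by (simp add: comul_bvec tmul_tone_right finite_supp_comul_tau)
qed

section \<open>Ideals of A_p<k>_*\<close>

lemma valid_mono_mres:
  assumes "valid_mono p a" and "valid_mono p b"
  shows "valid_mono p (mres a b)"
proof -
  have "{i. snd a i + snd b i \<noteq> 0} \<subseteq> {i. snd a i \<noteq> 0} \<union> {i. snd b i \<noteq> 0}" by auto
  hence "finite {i. snd a i + snd b i \<noteq> 0}"
    using assms by (auto simp: valid_mono_def intro: finite_subset)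
  thus ?thesis using assms by (simp add: valid_mono_def mres_def)
qed

lemma inAk_mono_mres:
  assumes "inAk_mono p k a" and "inAk_mono p k b"
  shows "inAk_mono p k (mres a b)"
  using assms by (auto simp: inAk_mono_def mres_def split: if_splits)

lemma mul_neq_zeroE:
  assumes "mul b x m \<noteq> 0"
  obtains a c where "b a \<noteq> 0" and "x c \<noteq> 0" and "m = mres a c"
  using assms unfolding mul_def supp_def
  by (auto elim!: sum.not_neutral_contains_not_neutral split: if_splits)

lemma Ak_add:
  assumes "x \<in> Ak p k" and "y \<in> Ak p k"
  shows "(\<lambda>m. x m + y m :: 'k::comm_ring_1) \<in> Ak p k"
proof -
  have "supp (\<lambda>m. x m + y m) \<subseteq> supp x \<union> supp y" by (auto simp: supp_def)
  moreover have "finite (supp x)" "finite (supp y)" using assms by (auto simp: Ak_def valid_elt_def)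
  ultimately have "finite (supp (\<lambda>m. x m + y m))" by (meson finite_UnI finite_subset)
  moreover have "x m + y m \<noteq> 0 \<Longrightarrow> x m \<noteq> 0 \<or> y m \<noteq> 0" for m by auto
  ultimately show ?thesis using assms by (simp add: Ak_def valid_elt_def) blast
qed

lemma Ak_scale:
  assumes "x \<in> Ak p k"
  shows "(\<lambda>m. c * x m :: 'k::comm_ring_1) \<in> Ak p k"
proof -
  have "supp (\<lambda>m. c * x m) \<subseteq> supp x" by (auto simp: supp_def)
  moreover have "finite (supp x)" using assms by (auto simp: Ak_def valid_elt_def)
  ultimately have "finite (supp (\<lambda>m. c * x m))" by (rule finite_subset)
  moreover have "c * x m \<noteq> 0 \<Longrightarrow> x m \<noteq> 0" for m by auto
  ultimately show ?thesis using assms by (simp add: Ak_def valid_elt_def)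
qed

lemma Ak_mul:
  assumes "b \<in> Ak p k" and "x \<in> Ak p k"
  shows "mul b x \<in> Ak p k"
proof -
  have "supp (mul b x) \<subseteq> (\<lambda>(a, c). mres a c) ` (supp b \<times> supp x)"
  proof
    fix m assume "m \<in> supp (mul b x)"
    then obtain a c where "a \<in> supp b" "c \<in> supp x" "m = mres a c"
      by (auto simp: supp_def elim: mul_neq_zeroE)
    thus "m \<in> (\<lambda>(a, c). mres a c) ` (supp b \<times> supp x)" by force
  qed
  moreover have "finite (supp b)" "finite (supp x)" using assms by (auto simp: Ak_def valid_elt_def)
  ultimately have "finite (supp (mul b x))" by (meson finite_SigmaI finite_imageI finite_subset)
  moreover have "valid_mono p m \<and> inAk_mono p k m" if "mul b x m \<noteq> 0" for m
    using that assms by (elim mul_neq_zeroE)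
      (auto simp: Ak_def valid_elt_def intro: valid_mono_mres inAk_mono_mres)
  ultimately show ?thesis by (simp add: Ak_def valid_elt_def)
qed

definition mono_dvd :: "mono \<Rightarrow> mono \<Rightarrow> bool" where
  "mono_dvd m a \<longleftrightarrow> fst m \<subseteq> fst a \<and> (\<forall>i. snd m i \<le> snd a i)"

lemma mono_dvd_mres_right: "mono_dvd (mres b c) a \<Longrightarrow> mono_dvd c a"
  by (auto simp: mono_dvd_def mres_def) (metis add_leE)

definition Ak_nondivisors :: "nat \<Rightarrow> nat \<Rightarrow> mono \<Rightarrow> 'k::comm_ring_1 elt set" where
  "Ak_nondivisors p k a = {f \<in> Ak p k. \<forall>m. f m \<noteq> 0 \<longrightarrow> \<not> mono_dvd m a}"

lemma sub_ideal_Ak_nondivisors: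
  "sub_ideal (Ak p k) (Ak_nondivisors p k a :: 'k::comm_ring_1 elt set)"
  unfolding sub_ideal_def
proof (intro conjI ballI allI impI)
  show "Ak_nondivisors p k a \<subseteq> Ak p k" by (auto simp: Ak_nondivisors_def)
  show "(\<lambda>_. 0) \<in> (Ak_nondivisors p k a :: 'k elt set)"
    by (simp add: Ak_nondivisors_def Ak_def valid_elt_def supp_def)
next
  fix x y :: "'k elt" assume "x \<in> Ak_nondivisors p k a" "y \<in> Ak_nondivisors p k a"
  thus "(\<lambda>m. x m + y m) \<in> Ak_nondivisors p k a"
    by (auto simp: Ak_nondivisors_def Ak_add) (metis add.right_neutral)
next
  fix c and x :: "'k elt" assume "x \<in> Ak_nondivisors p k a"
  thus "(\<lambda>m. c * x m) \<in> Ak_nondivisors p k a"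
    by (auto simp: Ak_nondivisors_def Ak_scale) (metis mult_zero_right)
next
  fix b x :: "'k elt" assume b: "b \<in> Ak p k" and x: "x \<in> Ak_nondivisors p k a"
  have "\<not> mono_dvd m a" if "mul b x m \<noteq> 0" for m
    using that x by (elim mul_neq_zeroE) (auto simp: Ak_nondivisors_def dest: mono_dvd_mres_right)
  thus "mul b x \<in> Ak_nondivisors p k a"
    using b x by (auto simp: Ak_nondivisors_def Ak_mul)
qed

lemma bvec_mem_Ak:
  assumes "valid_mono p m" and "inAk_mono p k m"
  shows "(bvec m :: 'k::comm_ring_1 elt) \<in> Ak p k"
  using assms by (simp add: Ak_def valid_elt_def supp_bvec) (simp add: bvec_def)

lemma valid_mono_polymono: "valid_mono p (polymono n e)"
proof -
  have "{i. snd (polymono n e) i \<noteq> 0} \<subseteq> {n}" by (auto simp: polymono_def split: if_splits)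
  hence "finite {i. snd (polymono n e) i \<noteq> 0}" by (rule finite_subset) simp
  thus ?thesis by (simp add: valid_mono_def polymono_def)
qed

lemma polymono_mem_Ak:
  "p ^ k dvd e \<Longrightarrow> (bvec (polymono n e) :: 'k::comm_ring_1 elt) \<in> Ak p k"
  by (rule bvec_mem_Ak[OF valid_mono_polymono]) (auto simp: inAk_mono_def polymono_def)

lemma Igens_subset_Ak_nondivisors:
  assumes "prime p"
  shows "Igens p k \<subseteq> (Ak_nondivisors p k (polymono 1 (p ^ k)) :: 'k::comm_ring_1 elt set)"
proof -
  have "bvec (polymono n (p ^ Suc k)) \<in> (Ak_nondivisors p k (polymono 1 (p ^ k)) :: 'k elt set)"
    if "n \<ge> 1" for n
  proof -
    have "p ^ k < p ^ Suc k" using prime_gt_1_nat[OF assms] by simp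
    hence "\<not> mono_dvd (polymono n (p ^ Suc k)) (polymono 1 (p ^ k))"
      using that by (auto simp: mono_dvd_def polymono_def split: if_splits dest!: spec[of _ n])
    moreover have "(bvec (polymono n (p ^ Suc k)) :: 'k elt) \<in> Ak p k"
      by (rule polymono_mem_Ak) (simp add: le_imp_power_dvd)
    ultimately show ?thesis by (auto simp: Ak_nondivisors_def bvec_def)
  qed
  moreover have "bvec (taumono 0) \<in> (Ak_nondivisors p k (polymono 1 (p ^ k)) :: 'k elt set)"
    if "p \<noteq> 2" "k = 0"
    using that bvec_mem_Ak[of p "taumono 0" k]
    by (auto simp: Ak_nondivisors_def bvec_def mono_dvd_def taumono_def polymono_def
        valid_mono_def inAk_mono_def)
  ultimately show ?thesis by (auto simp: Igens_def)
qed

lemma Ipk_coeff_x1_eq_0: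
  assumes "prime p" and "f \<in> Ipk p k"
  shows "f (polymono 1 (p ^ k)) = (0::'k::comm_ring_1)"
proof -
  have "f \<in> Ak_nondivisors p k (polymono 1 (p ^ k))"
    using assms(2) sub_ideal_Ak_nondivisors Igens_subset_Ak_nondivisors[OF assms(1)]
    unfolding Ipk_def by blast
  moreover have "mono_dvd m m" for m by (simp add: mono_dvd_def)
  ultimately show ?thesis unfolding Ak_nondivisors_def by blast
qed

lemma tens_ideal_slice_mem:
  assumes I: "sub_ideal B I" and vanish: "\<forall>f\<in>I. f a = 0" and t: "t \<in> tens_ideal B I"
  shows "(\<lambda>y. t (a, y)) \<in> (I :: 'k::comm_ring_1 elt set)"
proof -
  obtain xs where xs: "set xs \<subseteq> (I \<times> B) \<union> (B \<times> I)"
    and t_eq: "t = (\<lambda>x. \<Sum>(u, v)\<leftarrow>xs. tensor u v x)"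
    using t by (auto simp: tens_ideal_def)
  have zero: "(\<lambda>_. 0) \<in> I" and add: "\<And>x y. x \<in> I \<Longrightarrow> y \<in> I \<Longrightarrow> (\<lambda>m. x m + y m) \<in> I"
    and scale: "\<And>c x. x \<in> I \<Longrightarrow> (\<lambda>m. c * x m) \<in> I"
    using I by (auto simp: sub_ideal_def)
  from xs have "(\<lambda>y. \<Sum>(u, v)\<leftarrow>xs. tensor u v (a, y)) \<in> I"
  proof (induction xs)
    case Nil
    thus ?case using zero by simp
  next
    case (Cons uv xs)
    obtain u v where uv: "uv = (u, v)" by (cases uv)
    have IH: "(\<lambda>y. \<Sum>(u, v)\<leftarrow>xs. tensor u v (a, y)) \<in> I" using Cons by simp
    have "u a = 0 \<or> v \<in> I" using Cons.prems uv vanish by auto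
    thus ?case
      using IH add[OF scale[of v "u a"] IH] uv by (auto simp: tensor_def)
  qed
  thus ?thesis using t_eq by simp
qed

lemma sub_ideal_uminus:
  assumes "sub_ideal B I" and "x \<in> I"
  shows "(\<lambda>m. - x m :: 'k::comm_ring_1) \<in> I"
proof -
  have "\<forall>c. (\<lambda>m. c * x m) \<in> I" using assms unfolding sub_ideal_def by blast
  from this[rule_format, of "- 1"] show ?thesis by simp
qed

section \<open>Slices of the cocommutator\<close>

definition cocomm_slice :: "nat \<Rightarrow> 'k::comm_ring_1 tens \<Rightarrow> mono \<Rightarrow> 'k elt" where
  "cocomm_slice p t a = (\<lambda>y. tswap p t (a, y) - t (a, y))"

lemma quot_cocomm_slice_mem:
  assumes "sub_ideal B I" and "quot_cocomm p B I" and "\<forall>f\<in>I. f a = 0" and "y \<in> B"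
  shows "cocomm_slice p (comul p y) a \<in> (I :: 'k::comm_ring_1 elt set)"
  using tens_ideal_slice_mem[OF assms(1,3), of "\<lambda>z. tswap p (comul p y) z - comul p y z"] assms(2,4)
  by (simp add: quot_cocomm_def cocomm_slice_def)

lemma polymono_1_eq_iff:
  assumes "q > 0"
  shows "polymono 1 q = polymono m e \<longleftrightarrow> m = 1 \<and> e = q"
proof
  assume "polymono 1 q = polymono m e"
  hence "snd (polymono 1 q) 1 = snd (polymono m e) 1" by simp
  thus "m = 1 \<and> e = q" using assms by (auto simp: polymono_def split: if_splits)
qed auto

lemma bipoly_comul_gen_coeff_x1_left:
  assumes "prime p" and "n \<ge> 1" and "q > 0"
  shows "tens_of_bipoly (bipoly_comul_gen p q (Suc n) :: 'k::comm_ring_1 bipoly) (polymono 1 q, y)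
           = 0"
proof -
  have "\<not> (polymono 1 q = polymono (Suc n - j) (q * p ^ j))" if "j \<le> Suc n" for j
  proof
    assume "polymono 1 q = polymono (Suc n - j) (q * p ^ j)"
    hence "Suc n - j = 1" "q * p ^ j = q" unfolding polymono_1_eq_iff[OF assms(3)] by simp_all
    hence "p ^ n = 1" using that assms(3) by auto
    moreover have "p ^ n > 1"
      using assms(2) prime_gt_1_nat[OF assms(1)] by (intro one_less_power) auto
    ultimately show False by linarith
  qed
  thus ?thesis by (simp add: tens_of_bipoly_comul_gen_apply)
qed

lemma bipoly_comul_gen_coeff_x1_right:
  assumes "q > 0"
  shows "tens_of_bipoly (bipoly_comul_gen p q (Suc n) :: 'k::comm_ring_1 bipoly) (y, polymono 1 q)
           = bvec (polymono n (q * p)) y"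
proof -
  have "tens_of_bipoly (bipoly_comul_gen p q (Suc n) :: 'k bipoly) (y, polymono 1 q) =
      (\<Sum>j\<in>{0..Suc n}. if j = 1 then bvec (polymono n (q * p)) y else 0)"
    unfolding tens_of_bipoly_comul_gen_apply
    using polymono_1_eq_iff[OF assms] by (intro sum.cong) (auto simp: bvec_def)
  thus ?thesis by simp
qed

lemma cocomm_slice_bipoly_comul_gen:
  assumes "of_nat p = (0::'k::comm_ring_1)" and "prime p" and "n \<ge> 1" and "q > 0"
  shows "cocomm_slice p (tens_of_bipoly (bipoly_comul_gen p q (Suc n)) :: 'k tens) (polymono 1 q)
           = bvec (polymono n (q * p))"
  unfolding cocomm_slice_def tswap_tens_of_bipoly[OF assms(1,2)]
    bipoly_comul_gen_coeff_x1_left[OF assms(2-4)] bipoly_comul_gen_coeff_x1_right[OF assms(4)]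
  by simp

lemma cocomm_slice_comul_tau1:
  "cocomm_slice p (comul_tau p 1 :: 'k::comm_ring_1 tens) (polymono 1 1)
     = (\<lambda>y. - bvec (taumono 0) y)"
  unfolding cocomm_slice_def
proof (rule ext)
  fix y :: mono
  have ne: "polymono 1 1 \<noteq> taumono m" "polymono 1 1 \<noteq> unitmono" "polymono 1 1 \<noteq> polymono 0 e"
    for m e by (auto simp: polymono_def taumono_def unitmono_def fun_eq_iff)
  have "{0..1::nat} = {0, 1}" by auto
  moreover have "taumono a = taumono b \<longleftrightarrow> a = b" for a b by (simp add: taumono_def)
  ultimately have "comul_tau p 1 (polymono 1 1, y) = (bvec (taumono 0) y :: 'k)"
    and "comul_tau p 1 (y, polymono 1 1) = (0 :: 'k)"
    unfolding comul_tau_def tvec_def bvec_def using ne ne[symmetric]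
    by (simp_all del: One_nat_def)
  thus "tswap p (comul_tau p 1 :: 'k tens) (polymono 1 1, y) - comul_tau p 1 (polymono 1 1, y)
        = - bvec (taumono 0) y"
    by (simp add: tswap_def)
qed

lemma Igens_subset_if_cocomm_slices:
  assumes "CHAR('k::comm_ring_1) = p" and "prime p" and "sub_ideal (Ak p k) (I :: 'k elt set)"
    and slice: "\<And>y. y \<in> Ak p k \<Longrightarrow> cocomm_slice p (comul p y) (polymono 1 (p ^ k)) \<in> I"
  shows "Igens p k \<subseteq> I"
proof -
  have char0: "of_nat p = (0::'k)" using assms(1) by auto
  have pk: "p ^ k > 0" using prime_gt_0_nat[OF assms(2)] by simp
  have "bvec (polymono n (p ^ Suc k)) \<in> I" if "n \<ge> 1" for n
    using slice[OF polymono_mem_Ak[of p k "p ^ k" "Suc n"]]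
    unfolding comul_polymono_prime_power[OF assms(1,2)]
      cocomm_slice_bipoly_comul_gen[OF char0 assms(2) that pk]
    by (simp add: mult.commute)
  moreover have "bvec (taumono 0) \<in> I" if "p \<noteq> 2" "k = 0"
  proof -
    have tau1: "bvec (taumono 1) \<in> (Ak p k :: 'k elt set)"
      using that by (intro bvec_mem_Ak) (simp_all add: valid_mono_def inAk_mono_def taumono_def)
    have xi1: "polymono 1 (p ^ k) = polymono 1 1" using that by simp
    have "(\<lambda>y. - bvec (taumono 0) y) \<in> I"
      using slice[OF tau1] unfolding xi1 comul_taumono cocomm_slice_comul_tau1 .
    from sub_ideal_uminus[OF assms(3) this] show ?thesis by simp
  qed
  ultimately show ?thesis by (auto simp: Igens_def)
qed

theorem proposition4p7:
  fixes p k :: nat and I :: "('k::{field,finite}) elt set"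
  assumes "prime p" and "card (UNIV :: 'k set) = p"
    and "hopf_ideal p (Ak p k) I"
    and "I \<subseteq> Ipk p k"
    and "quot_cocomm p (Ak p k) I"
  shows "I = Ipk p k"
proof -
  have char: "CHAR('k) = p" using assms(1,2) by (rule CHAR_eq_prime_card)
  have ideal: "sub_ideal (Ak p k) I" using assms(3) by (simp add: hopf_ideal_def)
  have "\<forall>f\<in>I. f (polymono 1 (p ^ k)) = 0" using assms(1,4) Ipk_coeff_x1_eq_0 by blast
  hence "Igens p k \<subseteq> I"
    by (intro Igens_subset_if_cocomm_slices[OF char assms(1) ideal]
        quot_cocomm_slice_mem[OF ideal assms(5)])
  hence "Ipk p k \<subseteq> I" using ideal by (auto simp: Ipk_def)
  with assms(4) show ?thesis by blast
qed

end
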